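(* Let $0\le\beta\le1$. Then $C_\beta[f]\in\mathcal{K}((1-\beta)/2)$ for every $f\in\mathcal{K}$. In particular, $C_\beta[f]\in\mathcal{K}$ for every $f\in\mathcal{K}$.
   Context: $\mathbb{D}$ is the open unit disk; $\mathcal{A}$ the class of analytic $f$ on $\mathbb{D}$ with $f(0)=0$, $f'(0)=1$. For $\lambda<1$, $\mathcal{K}(\lambda)=\{f\in\mathcal{A}: f'\ne0,\ \mathrm{Re}\,(1+zf''(z)/f'(z))>\lambda \text{ on }\mathbb{D}\}$, and $\mathcal{K}=\mathcal{K}(0)$ is the class of normalized convex univalent functions. For $\beta\ge0$ and $f$ analytic on $\mathbb{D}$ with $f(0)=0$, $C_\beta[f](z)=\int_0^z \frac{f(w)}{w(1-w)^\beta}\,dw$ (principal branch of $(1-w)^\beta$). *)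

theory Defs
  imports "HOL-Complex_Analysis.Complex_Analysis"
begin

abbreviation unit_disk :: "complex set" where
  "unit_disk \<equiv> ball 0 1"

definition normalized_analytic :: "(complex \<Rightarrow> complex) \<Rightarrow> bool" where
  "normalized_analytic f \<longleftrightarrow> f holomorphic_on unit_disk \<and> f 0 = 0 \<and> deriv f 0 = 1"

definition convex_order :: "real \<Rightarrow> (complex \<Rightarrow> complex) \<Rightarrow> bool" where
  "convex_order lam f \<longleftrightarrow> normalized_analytic f \<and>
     (\<forall>z\<in>unit_disk. deriv f z \<noteq> 0 \<and>
        Re (1 + z * deriv (deriv f) z / deriv f z) > lam)"

text \<open>The operator C_beta[f](z) = integral from 0 to z of f(w) / (w (1-w)^beta) dw,
  principal branch of (1-w)^beta (complex powr uses the principal logarithm).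
  The integral is taken along the segment from 0 to z (path independent
  in the disk); the integrand's removable singularity at 0 is a single point.\<close>
definition C_op :: "real \<Rightarrow> (complex \<Rightarrow> complex) \<Rightarrow> complex \<Rightarrow> complex" where
  "C_op \<beta> f z = contour_integral (linepath 0 z)
       (\<lambda>w. f w / (w * (1 - w) powr (complex_of_real \<beta>)))"

end

(* Write f = z g. For convex f, the function w = 1 - g/f' vanishes at 0 and satisfies
   (1 - w) (1 + z f''/f') = 1 + z w'. By Jack's lemma, at a point z0 of smallest modulus with
   |w z0| >= 1 one has z0 w'(z0) = k w(z0) with k >= 1, and then the real part of
   1 + z0 f''(z0)/f'(z0) = (1 + k w(z0)) / (1 - w(z0)) is not positive. Hence |w| < 1 on the
   disk, which is the Marx-Strohhaecker bound Re (f'/g) = Re (z f'/f) > 1/2.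
   Since C_beta[f]' = g / (1 - z)^beta, the quantity 1 + z C''/C' equals f'/g + beta z/(1 - z),
   and Re (z/(1 - z)) > -1/2 on the disk gives the order (1 - beta)/2. *)

theory Submission
  imports Defs
begin

lemma Re_inverse_one_minus_gt:
  fixes w :: complex
  assumes "norm w < 1"
  shows "Re (1 / (1 - w)) > 1 / 2"
proof -
  have "(norm (1 - w))\<^sup>2 = 1 - 2 * Re w + (norm w)\<^sup>2"
    using cmod_power2 [of "1 - w"] cmod_power2 [of w] by (simp add: power2_eq_square algebra_simps)
  also have "\<dots> < 2 * (1 - Re w)"
    using assms power_strict_mono [of "norm w" 1 2] by simp
  finally have "(norm (1 - w))\<^sup>2 < 2 * Re (1 - w)" by simp
  moreover have "1 - w \<noteq> 0" using assms by auto
  ultimately show ?thesis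
    by (simp add: Re_divide' field_simps)
qed

lemma Re_div_one_minus_gt:
  fixes z :: complex
  assumes "norm z < 1"
  shows "Re (z / (1 - z)) > - 1 / 2"
proof -
  have "1 - z \<noteq> 0" using assms by auto
  then have "z / (1 - z) = 1 / (1 - z) - 1" by (simp add: field_simps)
  then show ?thesis using Re_inverse_one_minus_gt [OF assms] by simp
qed

lemma Re_one_plus_mult_div_one_minus_nonpos:
  fixes \<omega> :: complex and \<kappa> :: real
  assumes "norm \<omega> \<ge> 1" and "\<kappa> \<ge> 1"
  shows "Re ((1 + \<kappa> * \<omega>) / (1 - \<omega>)) \<le> 0"
proof -
  have "Re \<omega> \<le> (norm \<omega>)\<^sup>2"
  proof -
    have "norm \<omega> * 1 \<le> norm \<omega> * norm \<omega>" using assms(1) by (intro mult_left_mono) auto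
    then show ?thesis using complex_Re_le_cmod [of \<omega>] by (simp add: power2_eq_square)
  qed
  then have "(\<kappa> - 1) * Re \<omega> \<le> (\<kappa> - 1) * (norm \<omega>)\<^sup>2"
    using assms(2) by (intro mult_left_mono) auto
  moreover have "(norm \<omega>)\<^sup>2 = (Re \<omega>)\<^sup>2 + (Im \<omega>)\<^sup>2" by (rule cmod_power2)
  moreover have "1 \<le> (norm \<omega>)\<^sup>2" using assms(1) by (simp add: one_le_power)
  ultimately have "Re (1 + \<kappa> * \<omega>) * Re (1 - \<omega>) + Im (1 + \<kappa> * \<omega>) * Im (1 - \<omega>) \<le> 0"
    by (simp add: power2_eq_square algebra_simps)
  then show ?thesis
    by (simp add: Re_divide' divide_nonpos_nonneg)
qed

lemma norm_one_plus_le: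
  fixes x :: complex
  shows "norm (1 + x) \<le> 1 + Re x + (norm x)\<^sup>2 / 2"
proof (rule power2_le_imp_le)
  have "(norm (1 + x))\<^sup>2 = 1 + 2 * Re x + (norm x)\<^sup>2"
    using cmod_power2 [of "1 + x"] cmod_power2 [of x] by (simp add: power2_eq_square algebra_simps)
  then have "(1 + Re x + (norm x)\<^sup>2 / 2)\<^sup>2 = (norm (1 + x))\<^sup>2 + (Re x + (norm x)\<^sup>2 / 2)\<^sup>2"
    by (simp add: power2_eq_square algebra_simps)
  then show "(norm (1 + x))\<^sup>2 \<le> (1 + Re x + (norm x)\<^sup>2 / 2)\<^sup>2"
    by simp
  have "(Re x)\<^sup>2 \<le> (norm x)\<^sup>2"
    using abs_Re_le_cmod [of x] by (metis abs_le_square_iff abs_norm_cancel)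
  moreover have "0 \<le> 1 + Re x + (Re x)\<^sup>2 / 2"
    using zero_le_power2 [of "1 + Re x"] by (simp add: power2_eq_square algebra_simps)
  ultimately show "0 \<le> 1 + Re x + (norm x)\<^sup>2 / 2" by linarith
qed

lemma Schwarz_Lemma_scaled:
  fixes w :: "complex \<Rightarrow> complex"
  assumes holw: "w holomorphic_on ball 0 r" and w0: "w 0 = 0"
    and bound: "\<And>\<zeta>. norm \<zeta> < r \<Longrightarrow> norm (w \<zeta>) < M"
    and \<zeta>: "norm \<zeta> < r"
  shows "norm (w \<zeta>) \<le> M * norm \<zeta> / r"
proof -
  have r: "r > 0" using \<zeta> norm_ge_zero [of \<zeta>] by linarith
  have M: "M > 0" using bound [of 0] r w0 by simp
  define u where "u = (\<lambda>\<xi>. w (of_real r * \<xi>) / of_real M)"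
  have scale: "of_real r * \<xi> \<in> ball (0::complex) r" if "norm \<xi> < 1" for \<xi>
    using that r by (simp add: norm_mult)
  have "u holomorphic_on ball 0 1"
    unfolding u_def using M scale
    by (intro holomorphic_intros holomorphic_on_compose_gen [OF _ holw, unfolded o_def]) auto
  moreover have "u 0 = 0" using w0 by (simp add: u_def)
  moreover have "norm (u \<xi>) < 1" if "norm \<xi> < 1" for \<xi>
    using bound [of "of_real r * \<xi>"] scale [OF that] M by (simp add: u_def norm_divide)
  moreover have "norm (\<zeta> / of_real r) < 1" using \<zeta> r by (simp add: norm_divide)
  ultimately have "norm (u (\<zeta> / of_real r)) \<le> norm (\<zeta> / of_real r)"
    by (rule Schwarz_Lemma(1))
  moreover have "u (\<zeta> / of_real r) = w \<zeta> / of_real M" using r by (simp add: u_def)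
  ultimately show ?thesis using r M by (simp add: norm_divide field_simps)
qed

lemma tendsto_difference_quotient_at_right:
  fixes w :: "complex \<Rightarrow> complex"
  assumes deriv: "(w has_field_derivative d) (at z)"
  shows "((\<lambda>h. (w (z + v * of_real h) - w z) / of_real h) \<longlongrightarrow> d * v) (at_right 0)"
proof -
  have "((\<lambda>\<eta>. z + v * \<eta>) has_field_derivative v) (at 0)"
    by (auto intro!: derivative_eq_intros)
  moreover have "(w has_field_derivative d) (at (z + v * 0))" using deriv by simp
  ultimately have "((\<lambda>\<eta>. w (z + v * \<eta>)) has_field_derivative d * v) (at 0)"
    by (rule DERIV_chain2 [rotated])
  then have "((\<lambda>\<eta>. (w (z + v * \<eta>) - w z) / \<eta>) \<longlongrightarrow> d * v) (at 0)"
    by (simp add: DERIV_def)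
  moreover have "filterlim complex_of_real (at 0) (at_right 0)"
    by (intro filterlim_atI) (auto intro!: tendsto_eq_intros eventually_at_rightI [of 0 1])
  ultimately show ?thesis
    by (rule filterlim_compose)
qed

lemma Jack_directional_bound:
  fixes w :: "complex \<Rightarrow> complex" and z0 d u :: complex
  assumes deriv: "(w has_field_derivative d) (at z0)"
    and z0: "z0 \<noteq> 0" and wz0: "w z0 \<noteq> 0"
    and Schwarz: "\<And>\<zeta>. norm \<zeta> < norm z0 \<Longrightarrow> norm (w \<zeta>) \<le> norm (w z0) * norm \<zeta> / norm z0"
    and u: "Re u < 0"
  shows "Re (z0 * d / w z0 * u) \<le> Re u"
proof -
  define Q where "Q = (\<lambda>h::real. (w (z0 + z0 * u * of_real h) / w z0 - 1) / of_real h)"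
  define B where "B = (\<lambda>h::real. Re u + h * (norm u)\<^sup>2 / 2)"
  have "((\<lambda>h. (w (z0 + z0 * u * of_real h) - w z0) / of_real h) \<longlongrightarrow> d * (z0 * u)) (at_right 0)"
    by (rule tendsto_difference_quotient_at_right [OF deriv])
  then have "((\<lambda>h. Re (Q h)) \<longlongrightarrow> Re (z0 * d / w z0 * u)) (at_right 0)"
    unfolding Q_def using wz0
    by (intro tendsto_Re) (auto dest: tendsto_divide [OF _ tendsto_const, of _ _ _ "w z0"] simp: field_simps)
  moreover have "(B \<longlongrightarrow> Re u) (at_right 0)"
    unfolding B_def by (auto intro!: tendsto_eq_intros)
  txt \<open>For small h > 0 the point z0 (1 + h u) lies in the disk of radius norm z0, so the
    Schwarz bound gives Re (w / w z0) \<le> norm (1 + h u) \<le> 1 + h B h there.\<close>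
  moreover have "\<forall>\<^sub>F h in at_right 0. Re (Q h) \<le> B h"
  proof -
    have "\<forall>\<^sub>F h in at_right 0. B h < 0"
      using order_tendstoD(2) [OF \<open>(B \<longlongrightarrow> Re u) (at_right 0)\<close> u] .
    moreover have "\<forall>\<^sub>F h in at_right (0::real). h > 0" by (rule eventually_at_right_less)
    ultimately show ?thesis
    proof eventually_elim
      case (elim h)
      define n where "n = norm (1 + of_real h * u)"
      have "n \<le> 1 + h * B h"
        using norm_one_plus_le [of "of_real h * u"] elim
        by (simp add: n_def B_def norm_mult power2_eq_square algebra_simps)
      also have "\<dots> < 1" using elim by (simp add: mult_pos_neg)
      finally have "n < 1" .
      have "norm (z0 + z0 * u * of_real h) = norm z0 * n"
        by (simp add: n_def norm_mult [symmetric] algebra_simps)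
      then have "norm (w (z0 + z0 * u * of_real h)) \<le> norm (w z0) * n"
        using Schwarz [of "z0 + z0 * u * of_real h"] \<open>n < 1\<close> z0 by simp
      then have "norm (w (z0 + z0 * u * of_real h) / w z0) \<le> n"
        using wz0 by (simp add: norm_divide divide_le_eq mult.commute)
      then have "Re (w (z0 + z0 * u * of_real h) / w z0) \<le> n"
        using complex_Re_le_cmod order_trans by blast
      then have "Re (w (z0 + z0 * u * of_real h) / w z0) - 1 \<le> h * B h"
        using \<open>n \<le> 1 + h * B h\<close> by linarith
      then show ?case
        using elim by (simp add: Q_def Re_divide_of_real pos_divide_le_eq mult.commute)
    qed
  qed
  ultimately show ?thesis
    by (intro tendsto_le [OF trivial_limit_at_right_real])
qed

lemma Jack_lemma:
  fixes w :: "complex \<Rightarrow> complex"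
  assumes holw: "w holomorphic_on ball 0 1" and w0: "w 0 = 0"
    and z0: "z0 \<in> ball 0 1"
    and max: "\<And>\<zeta>. norm \<zeta> < norm z0 \<Longrightarrow> norm (w \<zeta>) < norm (w z0)"
  obtains k :: real where "k \<ge> 1" and "z0 * deriv w z0 = of_real k * w z0"
proof (cases "z0 = 0")
  case True
  then show ?thesis using that [of 1] w0 by simp
next
  case False
  have wz0: "w z0 \<noteq> 0" using max [of 0] False w0 by auto
  have "ball 0 (norm z0) \<subseteq> ball 0 1" using z0 by auto
  then have Schwarz: "norm (w \<zeta>) \<le> norm (w z0) * norm \<zeta> / norm z0" if "norm \<zeta> < norm z0" for \<zeta>
    using Schwarz_Lemma_scaled [OF holomorphic_on_subset [OF holw] w0 max that] by blast
  have deriv: "(w has_field_derivative deriv w z0) (at z0)"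
    using holomorphic_derivI [OF holw open_ball z0] .
  define \<kappa> where "\<kappa> = z0 * deriv w z0 / w z0"
  txt \<open>Testing the inward directions -1 + i s for all real s forces \<kappa> to be real and \<ge> 1.\<close>
  have bound: "- Re \<kappa> - s * Im \<kappa> \<le> -1" for s :: real
    using Jack_directional_bound [OF deriv False wz0 Schwarz, of "-1 + \<i> * of_real s"]
    unfolding \<kappa>_def [symmetric] by (simp add: mult.commute)
  have "Im \<kappa> = 0"
  proof (rule ccontr)
    assume "Im \<kappa> \<noteq> 0"
    then show False using bound [of "- Re \<kappa> / Im \<kappa>"] by (simp add: field_simps)
  qed
  then have "of_real (Re \<kappa>) = \<kappa>" by (simp add: complex_eq_iff)
  then have "z0 * deriv w z0 = of_real (Re \<kappa>) * w z0"
    using wz0 by (simp add: \<kappa>_def)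
  moreover have "Re \<kappa> \<ge> 1" using bound [of 0] by simp
  ultimately show ?thesis using that by blast
qed

lemma Jack_norm_less_one:
  fixes w P :: "complex \<Rightarrow> complex"
  assumes holw: "w holomorphic_on ball 0 1" and w0: "w 0 = 0"
    and P: "\<And>z. z \<in> ball 0 1 \<Longrightarrow> Re (P z) > 0"
    and eq: "\<And>z. z \<in> ball 0 1 \<Longrightarrow> (1 - w z) * P z = 1 + z * deriv w z"
    and z: "z \<in> ball 0 1"
  shows "norm (w z) < 1"
proof (rule ccontr)
  assume "\<not> norm (w z) < 1"
  define K where "K = {\<zeta> \<in> cball 0 (norm z). 1 \<le> norm (w \<zeta>)}"
  have "continuous_on (cball 0 (norm z)) w"
    using holomorphic_on_imp_continuous_on [OF holw] z
    by (elim continuous_on_subset) auto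
  then have "closed K"
    unfolding K_def by (intro continuous_on_closed_Collect_le continuous_intros) auto
  then have "compact K"
    by (metis K_def bounded_cball bounded_subset compact_eq_bounded_closed mem_Collect_eq subsetI)
  moreover have "z \<in> K" using \<open>\<not> norm (w z) < 1\<close> by (simp add: K_def)
  ultimately obtain z0 where "z0 \<in> K" and min: "\<And>\<zeta>. \<zeta> \<in> K \<Longrightarrow> norm z0 \<le> norm \<zeta>"
    using continuous_attains_inf [of K norm] continuous_on_norm_id by blast
  then have z0: "z0 \<in> ball 0 1" and wz0: "norm (w z0) \<ge> 1" using z by (auto simp: K_def)
  have "norm (w \<zeta>) < norm (w z0)" if "norm \<zeta> < norm z0" for \<zeta>
  proof -
    have "norm \<zeta> \<le> norm z" using \<open>z0 \<in> K\<close> that by (simp add: K_def)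
    then have "\<zeta> \<notin> K \<Longrightarrow> norm (w \<zeta>) < 1" by (simp add: K_def)
    then show ?thesis using min [of \<zeta>] that wz0 by fastforce
  qed
  then obtain k where k: "k \<ge> 1" "z0 * deriv w z0 = of_real k * w z0"
    using Jack_lemma [OF holw w0 z0] by blast
  then have eq0: "(1 - w z0) * P z0 = 1 + of_real k * w z0" using eq [OF z0] by simp
  then have "w z0 \<noteq> 1"
    using k(1) by (auto simp: complex_eq_iff)
  with eq0 have "P z0 = (1 + of_real k * w z0) / (1 - w z0)"
    by (simp add: field_simps)
  then have "Re (P z0) \<le> 0"
    using Re_one_plus_mult_div_one_minus_nonpos [OF wz0 k(1)] by simp
  with P [OF z0] show False by simp
qed

lemma deriv_eq_mult_id:
  fixes f g :: "complex \<Rightarrow> complex"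
  assumes "open S" and holg: "g holomorphic_on S"
    and fg: "\<And>z. z \<in> S \<Longrightarrow> f z = z * g z" and z: "z \<in> S"
  shows "deriv f z = g z + z * deriv g z"
proof -
  have "((\<lambda>z. z * g z) has_field_derivative g z + z * deriv g z) (at z)"
    using holomorphic_derivI [OF holg \<open>open S\<close> z] by (auto intro!: derivative_eq_intros)
  then have "(f has_field_derivative g z + z * deriv g z) (at z)"
    by (rule has_field_derivative_transform_within_open [OF _ \<open>open S\<close> z]) (simp add: fg)
  then show ?thesis by (rule DERIV_imp_deriv)
qed

lemma one_minus_notin_nonpos_Reals:
  fixes z :: complex
  assumes "norm z < 1"
  shows "1 - z \<notin> \<real>\<^sub>\<le>\<^sub>0"
  using assms abs_Re_le_cmod [of z] by (auto simp: complex_nonpos_Reals_iff)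

lemma has_field_derivative_div_one_minus_powr:
  fixes g :: "complex \<Rightarrow> complex"
  assumes "(g has_field_derivative g') (at z)" and "1 - z \<notin> \<real>\<^sub>\<le>\<^sub>0"
  shows "((\<lambda>z. g z / (1 - z) powr s) has_field_derivative
           (g' + s * g z / (1 - z)) / (1 - z) powr s) (at z)"
proof -
  have nz: "1 - z \<noteq> 0" "(1 - z) powr s \<noteq> 0" using assms(2) by auto
  have "((\<lambda>z. (1 - z) powr s) has_field_derivative - (s * (1 - z) powr (s - 1))) (at z)"
    using assms(2) by (auto intro!: derivative_eq_intros)
  also have "(1 - z) powr (s - 1) = (1 - z) powr s / (1 - z)"
    by (simp add: powr_diff)
  finally have "((\<lambda>z. (1 - z) powr s) has_field_derivative - (s * ((1 - z) powr s / (1 - z)))) (at z)" .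
  note quotient = DERIV_divide [OF assms(1) this nz(2)]
  have simplify: "(g' * P - g z * - (s * (P / (1 - z)))) / (P * P) = (g' + s * g z / (1 - z)) / P"
    if "P \<noteq> 0" for P
    using that nz(1) by (simp add: field_simps)
  from quotient show ?thesis unfolding simplify [OF nz(2)] .
qed

lemma Marx_Strohhaecker:
  fixes f g :: "complex \<Rightarrow> complex"
  assumes f: "convex_order 0 f"
    and holg: "g holomorphic_on ball 0 1" and fg: "\<And>z. z \<in> ball 0 1 \<Longrightarrow> f z = z * g z"
    and z: "z \<in> ball 0 1"
  shows "g z \<noteq> 0" and "Re (deriv f z / g z) > 1 / 2"
proof -
  have holf: "f holomorphic_on ball 0 1" and f'0: "deriv f 0 = 1"
    and f'nz: "\<And>z. z \<in> ball 0 1 \<Longrightarrow> deriv f z \<noteq> 0"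
    and conv: "\<And>z. z \<in> ball 0 1 \<Longrightarrow> Re (1 + z * deriv (deriv f) z / deriv f z) > 0"
    using f unfolding convex_order_def normalized_analytic_def by auto
  have f': "deriv f z = g z + z * deriv g z" if "z \<in> ball 0 1" for z
    using deriv_eq_mult_id [OF open_ball holg fg that] .
  have holf': "deriv f holomorphic_on ball 0 1"
    using holomorphic_deriv [OF holf open_ball] .
  define w where "w = (\<lambda>z. 1 - g z / deriv f z)"
  have holw: "w holomorphic_on ball 0 1"
    unfolding w_def using holg holf' f'nz by (auto intro!: holomorphic_intros)
  have w0: "w 0 = 0" using f' [of 0] f'0 by (simp add: w_def)
  have "(1 - w z) * (1 + z * deriv (deriv f) z / deriv f z) = 1 + z * deriv w z"
    if "z \<in> ball 0 1" for z
  proof -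
    have dw: "(w has_field_derivative
            - ((deriv g z * deriv f z - g z * deriv (deriv f) z) / (deriv f z * deriv f z))) (at z)"
      unfolding w_def using f'nz [OF that]
        holomorphic_derivI [OF holg open_ball that] holomorphic_derivI [OF holf' open_ball that]
      by (auto intro!: derivative_eq_intros simp: power2_eq_square)
    have gz: "g z = deriv f z - z * deriv g z" using f' [OF that] by simp
    have w': "deriv w z = - ((deriv g z * deriv f z - g z * deriv (deriv f) z) / (deriv f z * deriv f z))"
      using dw by (rule DERIV_imp_deriv)
    have w: "1 - w z = (deriv f z - z * deriv g z) / deriv f z" by (simp add: w_def gz)
    have alg: "(A - z * G') / A * (1 + z * B / A) = 1 + z * - ((G' * A - (A - z * G') * B) / (A * A))"
      if "A \<noteq> 0" for A B G' :: complex
      using that by (simp add: field_simps)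
    show ?thesis
      unfolding w w' gz using alg [OF f'nz [OF that]] .
  qed
  then have "norm (w z) < 1"
    using Jack_norm_less_one [of w "\<lambda>z. 1 + z * deriv (deriv f) z / deriv f z", OF holw w0 conv _ z]
    by blast
  then have "g z / deriv f z \<noteq> 0" by (auto simp: w_def)
  then show "g z \<noteq> 0" by simp
  have "deriv f z / g z = 1 / (1 - w z)" by (simp add: w_def)
  then show "Re (deriv f z / g z) > 1 / 2"
    using Re_inverse_one_minus_gt [OF \<open>norm (w z) < 1\<close>] by simp
qed

lemma linepath_integral_has_field_derivative:
  fixes h :: "complex \<Rightarrow> complex"
  assumes "convex S" "open S" "a \<in> S" and holh: "h holomorphic_on S" and z: "z \<in> S"
  shows "((\<lambda>x. contour_integral (linepath a x) h) has_field_derivative h z) (at z)"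
proof -
  have "((\<lambda>x. contour_integral (linepath a x) h) has_field_derivative h z) (at z within S)"
  proof (rule triangle_contour_integrals_convex_primitive)
    show "continuous_on S h" using holh by (rule holomorphic_on_imp_continuous_on)
    fix b c assume "b \<in> S" "c \<in> S"
    then have "path_image (linepath a b +++ linepath b c +++ linepath c a) \<subseteq> S"
      using \<open>convex S\<close> \<open>a \<in> S\<close> by (auto simp: path_image_join closed_segment_subset)
    then have "(h has_contour_integral 0) (linepath a b +++ linepath b c +++ linepath c a)"
      by (intro Cauchy_theorem_convex_simple [OF holh \<open>convex S\<close>]) auto
    then show "contour_integral (linepath a b) h + contour_integral (linepath b c) h
               + contour_integral (linepath c a) h = 0"
      by (rule has_chain_integral_chain_integral3)
  qed (use assms in auto)
  then show ?thesis using at_within_open [OF z \<open>open S\<close>] by simp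
qed

lemma C_op_0 [simp]: "C_op \<beta> f 0 = 0"
  by (simp add: C_op_def)

lemma C_op_has_field_derivative:
  fixes f g :: "complex \<Rightarrow> complex"
  assumes holg: "g holomorphic_on ball 0 1" and fg: "\<And>z. z \<in> ball 0 1 \<Longrightarrow> f z = z * g z"
    and z: "z \<in> ball 0 1"
  shows "(C_op \<beta> f has_field_derivative g z / (1 - z) powr of_real \<beta>) (at z)"
proof -
  define h where "h = (\<lambda>w. g w / (1 - w) powr of_real \<beta>)"
  have "h holomorphic_on ball 0 1"
    unfolding h_def using holg one_minus_notin_nonpos_Reals
    by (force intro!: holomorphic_intros)
  then have "((\<lambda>x. contour_integral (linepath 0 x) h) has_field_derivative h z) (at z)"
    using linepath_integral_has_field_derivative [OF convex_ball open_ball _ _ z] by simp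
  moreover have "contour_integral (linepath 0 x) h = C_op \<beta> f x" if "x \<in> ball 0 1" for x
  proof (cases "x = 0")
    case False
    have "path_image (linepath 0 x) \<subseteq> ball 0 1"
      using that by (simp add: closed_segment_subset)
    then show ?thesis
      unfolding C_op_def using False
      by (intro contour_integral_spike_finite_simple_path [of "{0}"]) (auto simp: h_def fg)
  qed simp
  ultimately show ?thesis
    unfolding h_def by (rule has_field_derivative_transform_within_open [OF _ open_ball z])
qed

lemma Re_one_plus_log_deriv_div_powr_gt:
  fixes f g :: "complex \<Rightarrow> complex" and \<beta> :: real
  defines "h \<equiv> \<lambda>z. g z / (1 - z) powr of_real \<beta>"
  assumes \<beta>: "0 \<le> \<beta>" and f: "convex_order 0 f"
    and holg: "g holomorphic_on ball 0 1" and fg: "\<And>z. z \<in> ball 0 1 \<Longrightarrow> f z = z * g z"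
    and z: "z \<in> ball 0 1"
  shows "h z \<noteq> 0" and "Re (1 + z * deriv h z / h z) > (1 - \<beta>) / 2"
proof -
  have "1 - z \<notin> \<real>\<^sub>\<le>\<^sub>0" using z one_minus_notin_nonpos_Reals by simp
  then have nz: "1 - z \<noteq> 0" "(1 - z) powr of_real \<beta> \<noteq> 0" by auto
  have gnz: "g z \<noteq> 0" and MS: "Re (deriv f z / g z) > 1 / 2"
    using Marx_Strohhaecker [OF f holg fg z] by auto
  then show "h z \<noteq> 0" using nz by (simp add: h_def)
  have h': "deriv h z = (deriv g z + of_real \<beta> * g z / (1 - z)) / (1 - z) powr of_real \<beta>"
    unfolding h_def using holomorphic_derivI [OF holg open_ball z] \<open>1 - z \<notin> \<real>\<^sub>\<le>\<^sub>0\<close>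
    by (intro DERIV_imp_deriv has_field_derivative_div_one_minus_powr)
  have "1 + z * ((G' + b * G / (1 - z)) / P) / (G / P) = (G + z * G') / G + b * (z / (1 - z))"
    if "G \<noteq> 0" "P \<noteq> 0" for G G' P b :: complex
    using that nz(1) by (simp add: field_simps)
  then have "1 + z * deriv h z / h z = (g z + z * deriv g z) / g z + of_real \<beta> * (z / (1 - z))"
    unfolding h' using gnz nz(2) by (simp add: h_def)
  also have "g z + z * deriv g z = deriv f z"
    using deriv_eq_mult_id [OF open_ball holg fg z] by simp
  finally have "1 + z * deriv h z / h z = deriv f z / g z + \<beta> *\<^sub>R (z / (1 - z))"
    by (simp add: scaleR_conv_of_real)
  then have "Re (1 + z * deriv h z / h z) = Re (deriv f z / g z) + \<beta> * Re (z / (1 - z))"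
    by (simp only: plus_complex.sel scaleR_complex.sel)
  moreover have "\<beta> * Re (z / (1 - z)) \<ge> \<beta> * (- 1 / 2)"
    using Re_div_one_minus_gt [of z] z \<beta> by (intro mult_left_mono) auto
  ultimately show "Re (1 + z * deriv h z / h z) > (1 - \<beta>) / 2"
    using MS by (simp add: field_simps)
qed

lemma convex_order_mono:
  assumes "convex_order l f" and "m \<le> l"
  shows "convex_order m f"
  using assms unfolding convex_order_def by force

lemma convex_order_C_op:
  fixes f :: "complex \<Rightarrow> complex"
  assumes \<beta>: "0 \<le> \<beta>" and f: "convex_order 0 f"
  shows "convex_order ((1 - \<beta>) / 2) (C_op \<beta> f)"
proof -
  have holf: "f holomorphic_on ball 0 1" and "f 0 = 0" and f'0: "deriv f 0 = 1"
    using f unfolding convex_order_def normalized_analytic_def by auto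
  obtain g where holg: "g holomorphic_on ball 0 1"
    and fg': "\<And>z. norm z < 1 \<Longrightarrow> f z = z * g z" and g0: "deriv f 0 = g 0"
    using Schwarz3 [OF holf \<open>f 0 = 0\<close>] by blast
  have fg: "\<And>z. z \<in> ball 0 1 \<Longrightarrow> f z = z * g z" using fg' by simp
  define h where "h = (\<lambda>z. g z / (1 - z) powr of_real \<beta>)"
  define F where "F = C_op \<beta> f"
  have F': "(F has_field_derivative h z) (at z)" if "z \<in> ball 0 1" for z
    unfolding F_def h_def using C_op_has_field_derivative [OF holg fg that] .
  then have derivF: "deriv F z = h z" if "z \<in> ball 0 1" for z
    using that by (blast intro: DERIV_imp_deriv)
  have derivF': "deriv (deriv F) z = deriv h z" if "z \<in> ball 0 1" for z
    using eventually_nhds_in_open [OF open_ball that] derivF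
    by (intro deriv_cong_ev) (auto elim!: eventually_mono)
  have "h z \<noteq> 0" and "Re (1 + z * deriv h z / h z) > (1 - \<beta>) / 2" if "z \<in> ball 0 1" for z
    using Re_one_plus_log_deriv_div_powr_gt [OF \<beta> f holg fg that] unfolding h_def by auto
  moreover have "F holomorphic_on ball 0 1"
    using F' by (auto simp: holomorphic_on_open [OF open_ball] intro!: exI)
  moreover have "deriv F 0 = 1"
    using derivF [of 0] f'0 g0 by (simp add: h_def)
  moreover have "F 0 = 0" by (simp add: F_def)
  ultimately have "convex_order ((1 - \<beta>) / 2) F"
    unfolding convex_order_def normalized_analytic_def by (simp add: derivF derivF')
  then show ?thesis by (simp add: F_def)
qed

theorem theorem2p13:
  fixes \<beta> :: real and f :: "complex \<Rightarrow> complex"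
  assumes "0 \<le> \<beta>" and "\<beta> \<le> 1"
    and "convex_order 0 f"
  shows "convex_order ((1 - \<beta>) / 2) (C_op \<beta> f) \<and> convex_order 0 (C_op \<beta> f)"
proof
  show *: "convex_order ((1 - \<beta>) / 2) (C_op \<beta> f)"
    using convex_order_C_op [OF assms(1,3)] .
  show "convex_order 0 (C_op \<beta> f)"
    using convex_order_mono [OF *] assms(2) by simp
qed

end
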